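(* Let $W\ge0$ be a function on $\mathbb{R}$ with $\log W(x)/|x|\to-\infty$ as $|x|\to\infty$ such that the orthonormal polynomials $p_0,p_1,\dots$ with respect to $W(x)dx$ exist. Let $d\ge\mathbf{m}\ge1$, real $a_1,\dots,a_\mathbf{m}$, measurable $E\subset\mathbb{R}$ and $s\in\mathbb{C}$ be such that $1-sPK_kP$ is invertible on $L^2(\mathbb{R})$ for $k=d-\mathbf{m}+1,\dots,d$. Then $$\det\Big[\big\langle\psi_{d-j},\big(1-sP(1-sPK_dP)^{-1}(1-K_d)\big)\hat{\mathbf{v}}_k\big\rangle\Big]_{j,k=1}^{\mathbf{m}}=\det\Big[\big\langle\psi_{d-j},\big(1-sP(1-sPK_{d-j+1}P)^{-1}(1-K_{d-j+1})\big)\hat{\mathbf{v}}_k\big\rangle\Big]_{j,k=1}^{\mathbf{m}}.$$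
   Context: $\psi_k(x)=p_k(x)W(x)^{1/2}$; for $k\ge1$, $K_k$ is the integral operator with kernel $K_k(x,y)=\sum_{i=0}^{k-1}\psi_i(x)\psi_i(y)$; $P$ is multiplication by $\chi_E$; $\hat{\mathbf{v}}_k(x)=e^{a_kx}W(x)^{1/2}$; $\langle f,g\rangle=\int_{\mathbb{R}}f(x)g(x)dx$. *)

theory Defs
  imports "HOL-Analysis.Analysis" "HOL-Computational_Algebra.Polynomial" "Jordan_Normal_Form.Determinant"
begin

definition L2 :: "(real \<Rightarrow> complex) set" where
  "L2 = {f. f \<in> borel_measurable lebesgue \<and> integrable lebesgue (\<lambda>x. (cmod (f x))^2)}"

text \<open>Bilinear pairing <f,g> = integral of f g (no conjugation), as in the paper.\<close>
definition ip :: "(real \<Rightarrow> complex) \<Rightarrow> (real \<Rightarrow> complex) \<Rightarrow> complex" where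
  "ip f g = (LINT x|lebesgue. f x * g x)"

definition psi :: "(nat \<Rightarrow> real poly) \<Rightarrow> (real \<Rightarrow> real) \<Rightarrow> nat \<Rightarrow> real \<Rightarrow> complex" where
  "psi p W i x = complex_of_real (poly (p i) x * sqrt (W x))"

definition Kop :: "(nat \<Rightarrow> real poly) \<Rightarrow> (real \<Rightarrow> real) \<Rightarrow> nat \<Rightarrow> (real \<Rightarrow> complex) \<Rightarrow> real \<Rightarrow> complex" where
  "Kop p W k f = (\<lambda>x. \<Sum>i<k. psi p W i x * ip (psi p W i) f)"

definition Pop :: "real set \<Rightarrow> (real \<Rightarrow> complex) \<Rightarrow> real \<Rightarrow> complex" where
  "Pop E f = (\<lambda>x. indicator E x * f x)"

definition vhat :: "(real \<Rightarrow> real) \<Rightarrow> real \<Rightarrow> real \<Rightarrow> complex" where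
  "vhat W a = (\<lambda>x. complex_of_real (exp (a * x) * sqrt (W x)))"

definition L2_invertible :: "((real \<Rightarrow> complex) \<Rightarrow> (real \<Rightarrow> complex)) \<Rightarrow> bool" where
  "L2_invertible T \<longleftrightarrow>
     (\<forall>f\<in>L2. T f \<in> L2) \<and>
     (\<forall>g\<in>L2. \<exists>f\<in>L2. AE x in lebesgue. T f x = g x) \<and>
     (\<forall>f\<in>L2. \<forall>h\<in>L2. (AE x in lebesgue. T f x = T h x) \<longrightarrow> (AE x in lebesgue. f x = h x))"

definition L2_inv :: "((real \<Rightarrow> complex) \<Rightarrow> (real \<Rightarrow> complex)) \<Rightarrow> (real \<Rightarrow> complex) \<Rightarrow> real \<Rightarrow> complex" where
  "L2_inv T g = (SOME f. f \<in> L2 \<and> (AE x in lebesgue. T f x = g x))"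

definition Top :: "(nat \<Rightarrow> real poly) \<Rightarrow> (real \<Rightarrow> real) \<Rightarrow> real set \<Rightarrow> complex \<Rightarrow> nat
    \<Rightarrow> (real \<Rightarrow> complex) \<Rightarrow> real \<Rightarrow> complex" where
  "Top p W E s k f = (\<lambda>x. f x - s * Pop E (Kop p W k (Pop E f)) x)"

definition Aop :: "(nat \<Rightarrow> real poly) \<Rightarrow> (real \<Rightarrow> real) \<Rightarrow> real set \<Rightarrow> complex \<Rightarrow> nat
    \<Rightarrow> (real \<Rightarrow> complex) \<Rightarrow> real \<Rightarrow> complex" where
  "Aop p W E s n g = (\<lambda>x. g x - s * Pop E (L2_inv (Top p W E s n) (\<lambda>y. g y - Kop p W n g y)) x)"

end

theory Submission
  imports Defs
begin

text \<open>
  Write \<open>A\<^sub>n = 1 - sP(1 - sPK\<^sub>nP)\<^sup>-\<^sup>1(1 - K\<^sub>n)\<close>. Since \<open>K\<^sub>k\<^sub>+\<^sub>1 = K\<^sub>k + \<psi>\<^sub>k\<langle>\<psi>\<^sub>k,\<cdot>\<rangle>\<close> is a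
  rank-one perturbation of \<open>K\<^sub>k\<close>, comparing the two resolvents gives
  \<open>A\<^sub>k\<^sub>+\<^sub>1 g = A\<^sub>k g + \<langle>\<psi>\<^sub>k, A\<^sub>k\<^sub>+\<^sub>1 g\<rangle> sP(1 - sPK\<^sub>kP)\<^sup>-\<^sup>1P\<psi>\<^sub>k\<close>.
  Telescoping from \<open>k = d - j\<close> up to \<open>d\<close>, the \<open>j\<close>-th row of the left matrix is the \<open>j\<close>-th
  row of the right matrix plus a combination of its earlier rows, so the two determinants agree.
\<close>

lemma L2_lincomb:
  assumes "f \<in> L2" "g \<in> L2"
  shows "(\<lambda>x. a * f x + b * g x) \<in> L2"
proof -
  have m: "(\<lambda>x. a * f x + b * g x) \<in> borel_measurable lebesgue"
    using assms by (auto simp: L2_def)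
  have I: "integrable lebesgue (\<lambda>x. 2 * (cmod a)^2 * (cmod (f x))^2 + 2 * (cmod b)^2 * (cmod (g x))^2)"
    using assms by (auto simp: L2_def)
  have bound: "(cmod (a * f x + b * g x))^2
      \<le> 2 * (cmod a)^2 * (cmod (f x))^2 + 2 * (cmod b)^2 * (cmod (g x))^2" for x
  proof -
    have "cmod (a * f x + b * g x) \<le> cmod a * cmod (f x) + cmod b * cmod (g x)"
      by (metis norm_mult norm_triangle_ineq)
    hence "(cmod (a * f x + b * g x))^2 \<le> (cmod a * cmod (f x) + cmod b * cmod (g x))^2"
      by (simp add: power_mono)
    also have "\<dots> \<le> 2 * (cmod a)^2 * (cmod (f x))^2 + 2 * (cmod b)^2 * (cmod (g x))^2"
      using zero_le_power2[of "cmod a * cmod (f x) - cmod b * cmod (g x)"]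
      by (simp add: power2_eq_square algebra_simps)
    finally show ?thesis .
  qed
  have "integrable lebesgue (\<lambda>x. (cmod (a * f x + b * g x))^2)"
    by (rule Bochner_Integration.integrable_bound[OF I]) (use m bound in auto)
  thus ?thesis using m by (simp add: L2_def)
qed

lemma L2_add: "f \<in> L2 \<Longrightarrow> g \<in> L2 \<Longrightarrow> (\<lambda>x. f x + g x) \<in> L2"
  using L2_lincomb[of f g 1 1] by simp

lemma L2_diff: "f \<in> L2 \<Longrightarrow> g \<in> L2 \<Longrightarrow> (\<lambda>x. f x - g x) \<in> L2"
  using L2_lincomb[of f g 1 "-1"] by simp

lemma L2_mult_left: "f \<in> L2 \<Longrightarrow> (\<lambda>x. c * f x) \<in> L2"
  using L2_lincomb[of f f c 0] by simp

lemma L2_Pop: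
  assumes "f \<in> L2" "E \<in> sets lebesgue"
  shows "Pop E f \<in> L2"
proof -
  have "f \<in> borel_measurable lebesgue" using assms(1) by (simp add: L2_def)
  hence m: "Pop E f \<in> borel_measurable lebesgue"
    using assms(2) unfolding Pop_def by measurable
  have "integrable lebesgue (\<lambda>x. (cmod (Pop E f x))^2)"
    by (rule Bochner_Integration.integrable_bound[of _ "\<lambda>x. (cmod (f x))^2"])
       (use assms m in \<open>auto simp: L2_def Pop_def indicator_def\<close>)
  thus ?thesis using m by (simp add: L2_def)
qed

lemma integrable_mult_L2:
  assumes "f \<in> L2" "g \<in> L2"
  shows "integrable lebesgue (\<lambda>x. f x * g x)"
proof -
  have m: "(\<lambda>x. f x * g x) \<in> borel_measurable lebesgue"
    using assms by (auto simp: L2_def)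
  have I: "integrable lebesgue (\<lambda>x. (cmod (f x))^2 + (cmod (g x))^2)"
    using assms by (auto simp: L2_def)
  have "cmod (f x * g x) \<le> (cmod (f x))^2 + (cmod (g x))^2" for x
    using zero_le_power2[of "cmod (f x) - cmod (g x)"]
    by (simp add: norm_mult power2_eq_square algebra_simps)
       (smt (verit) mult_nonneg_nonneg norm_ge_zero)
  thus ?thesis
    by (intro Bochner_Integration.integrable_bound[OF I m]) auto
qed

lemma ip_lincomb:
  assumes "f \<in> L2" "g \<in> L2" "h \<in> L2"
  shows "ip f (\<lambda>x. a * g x + b * h x) = a * ip f g + b * ip f h"
proof -
  have "ip f (\<lambda>x. a * g x + b * h x) = (LINT x|lebesgue. a * (f x * g x) + b * (f x * h x))"
    unfolding ip_def by (simp add: algebra_simps)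
  also have "\<dots> = a * ip f g + b * ip f h"
    unfolding ip_def using assms by (simp add: integrable_mult_L2)
  finally show ?thesis .
qed

lemma ip_cong_AE:
  assumes "f \<in> L2" "g \<in> L2" "h \<in> L2" "AE x in lebesgue. g x = h x"
  shows "ip f g = ip f h"
  unfolding ip_def using assms by (intro integral_cong_AE) (auto simp: L2_def)

lemma L2_inv_correct:
  assumes "L2_invertible T" "g \<in> L2"
  shows "L2_inv T g \<in> L2" "AE x in lebesgue. T (L2_inv T g) x = g x"
proof -
  have "\<exists>f. f \<in> L2 \<and> (AE x in lebesgue. T f x = g x)"
    using assms by (auto simp: L2_invertible_def)
  hence "L2_inv T g \<in> L2 \<and> (AE x in lebesgue. T (L2_inv T g) x = g x)"
    unfolding L2_inv_def by (rule someI_ex)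
  thus "L2_inv T g \<in> L2" "AE x in lebesgue. T (L2_inv T g) x = g x" by auto
qed

lemma L2_invertible_AE_injective:
  assumes "L2_invertible T" "f \<in> L2" "h \<in> L2" "AE x in lebesgue. T f x = T h x"
  shows "AE x in lebesgue. f x = h x"
  using assms by (auto simp: L2_invertible_def)

lemma det_add_multiples_of_earlier_rows:
  fixes M R :: "'a::comm_ring_1 mat"
  assumes R: "R \<in> carrier_mat m m" and M: "M \<in> carrier_mat m m"
    and rows: "\<And>j k. j < m \<Longrightarrow> k < m \<Longrightarrow> M $$ (j, k) = R $$ (j, k) + (\<Sum>i<j. c j i * R $$ (i, k))"
  shows "det M = det R"
proof -
  define L where "L = mat m m (\<lambda>(j, i). if i = j then 1 else if i < j then c j i else 0)"
  have L: "L \<in> carrier_mat m m" unfolding L_def by simp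
  have "M = L * R"
  proof (rule eq_matI)
    fix j k assume "j < dim_row (L * R)" "k < dim_col (L * R)"
    hence j: "j < m" and k: "k < m" using L R by auto
    have "(L * R) $$ (j, k) = (\<Sum>i<m. L $$ (j, i) * R $$ (i, k))"
      using j k L R by (simp add: scalar_prod_def atLeast0LessThan)
    also have "\<dots> = (\<Sum>i\<in>insert j {..<j}. L $$ (j, i) * R $$ (i, k))"
      using j by (intro sum.mono_neutral_right) (auto simp: L_def)
    also have "\<dots> = R $$ (j, k) + (\<Sum>i<j. c j i * R $$ (i, k))"
      using j by (simp add: L_def)
    finally show "M $$ (j, k) = (L * R) $$ (j, k)" using rows[OF j k] by simp
  qed (use L R M in auto)
  moreover have "det L = 1"
  proof -
    have "det L = prod_list (diag_mat L)"
      by (rule det_lower_triangular[OF _ L]) (auto simp: L_def)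
    also have "diag_mat L = replicate m 1"
      by (auto simp: diag_mat_def L_def intro!: nth_equalityI)
    finally show ?thesis by simp
  qed
  ultimately show ?thesis using det_mult[OF L R] by simp
qed

lemma Kop_Suc: "Kop p W (Suc k) f x = Kop p W k f x + psi p W k x * ip (psi p W k) f"
  by (simp add: Kop_def)

lemma Top_Suc:
  "Top p W E s k f x = Top p W E s (Suc k) f x + s * Pop E (psi p W k) x * ip (psi p W k) (Pop E f)"
  by (simp add: Top_def Kop_Suc Pop_def algebra_simps)

lemma Top_eq_self_if_Pop_zero:
  assumes "Pop E q = (\<lambda>x. 0)"
  shows "Top p W E s k q = q"
  using assms by (simp add: Top_def Kop_def ip_def Pop_def)

text \<open>The vector \<open>sP(1 - sPK\<^sub>kP)\<^sup>-\<^sup>1P\<psi>\<^sub>k\<close> by which \<open>A\<^sub>k\<^sub>+\<^sub>1\<close> and \<open>A\<^sub>k\<close> differ.\<close>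
definition Aop_increment :: "(nat \<Rightarrow> real poly) \<Rightarrow> (real \<Rightarrow> real) \<Rightarrow> real set \<Rightarrow> complex \<Rightarrow> nat
    \<Rightarrow> real \<Rightarrow> complex" where
  "Aop_increment p W E s k = (\<lambda>x. s * Pop E (L2_inv (Top p W E s k) (Pop E (psi p W k))) x)"

locale L2_kernel =
  fixes p :: "nat \<Rightarrow> real poly" and W :: "real \<Rightarrow> real" and E :: "real set" and s :: complex
  assumes psi_L2: "\<And>i. psi p W i \<in> L2" and E_meas: "E \<in> sets lebesgue"
begin

lemma Pop_L2: "f \<in> L2 \<Longrightarrow> Pop E f \<in> L2"
  using L2_Pop E_meas by blast

lemma Kop_L2: "f \<in> L2 \<Longrightarrow> Kop p W k f \<in> L2"
proof (induction k)
  case 0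
  then show ?case by (simp add: Kop_def L2_def)
next
  case (Suc k)
  have "Kop p W (Suc k) f = (\<lambda>x. Kop p W k f x + ip (psi p W k) f * psi p W k x)"
    by (auto simp: Kop_Suc fun_eq_iff mult.commute)
  then show ?case using Suc psi_L2 by (auto intro!: L2_add L2_mult_left)
qed

lemma Kop_lincomb:
  assumes "g \<in> L2" "h \<in> L2"
  shows "Kop p W k (\<lambda>x. a * g x + b * h x) x = a * Kop p W k g x + b * Kop p W k h x"
  unfolding Kop_def using assms psi_L2
  by (simp add: ip_lincomb sum_distrib_left sum.distrib algebra_simps)

lemma Top_lincomb:
  assumes "g \<in> L2" "h \<in> L2"
  shows "Top p W E s k (\<lambda>x. a * g x + b * h x) x = a * Top p W E s k g x + b * Top p W E s k h x"
proof -
  have "Pop E (\<lambda>x. a * g x + b * h x) = (\<lambda>x. a * Pop E g x + b * Pop E h x)"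
    by (auto simp: Pop_def algebra_simps)
  moreover have "Kop p W k (\<lambda>x. a * Pop E g x + b * Pop E h x) y
      = a * Kop p W k (Pop E g) y + b * Kop p W k (Pop E h) y" for y
    using assms by (intro Kop_lincomb Pop_L2)
  ultimately show ?thesis
    unfolding Top_def by (simp add: Pop_def algebra_simps)
qed

lemma Aop_L2:
  assumes "L2_invertible (Top p W E s n)" "g \<in> L2"
  shows "Aop p W E s n g \<in> L2"
  unfolding Aop_def using assms
  by (intro L2_diff L2_mult_left Pop_L2 L2_inv_correct(1) Kop_L2) auto

lemma Aop_increment_L2:
  assumes "L2_invertible (Top p W E s k)"
  shows "Aop_increment p W E s k \<in> L2"
  unfolding Aop_increment_def using assms psi_L2
  by (intro L2_mult_left Pop_L2 L2_inv_correct(1))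

lemma Top_L2_inv_Top_Suc_AE:
  assumes T_Suc: "L2_invertible (Top p W E s (Suc k))" and g: "g \<in> L2"
  shows "AE x in lebesgue. Top p W E s k (L2_inv (Top p W E s (Suc k)) (\<lambda>y. g y - Kop p W (Suc k) g y)) x
     = g x - Kop p W k g x - ip (psi p W k) (Aop p W E s (Suc k) g) * Pop E (psi p W k) x
       - ip (psi p W k) g * (psi p W k x - Pop E (psi p W k) x)"
proof -
  define f where "f = L2_inv (Top p W E s (Suc k)) (\<lambda>y. g y - Kop p W (Suc k) g y)"
  have f: "f \<in> L2" "AE x in lebesgue. Top p W E s (Suc k) f x = g x - Kop p W (Suc k) g x"
    unfolding f_def using L2_inv_correct[OF T_Suc] g by (auto intro: L2_diff Kop_L2)
  have "Aop p W E s (Suc k) g = (\<lambda>x. g x - s * Pop E f x)"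
    by (simp add: Aop_def f_def)
  then have c: "ip (psi p W k) (Aop p W E s (Suc k) g) = ip (psi p W k) g - s * ip (psi p W k) (Pop E f)"
    using ip_lincomb[OF psi_L2 g Pop_L2[OF f(1)], where a=1 and b="- s"] by simp
  show ?thesis
    using f(2) unfolding f_def[symmetric]
  proof eventually_elim
    case (elim x)
    have "Top p W E s k f x = Top p W E s (Suc k) f x + s * Pop E (psi p W k) x * ip (psi p W k) (Pop E f)"
      by (rule Top_Suc)
    then show ?case
      using elim by (simp add: c Kop_Suc algebra_simps)
  qed
qed

lemma Pop_L2_inv_Top_Suc_AE:
  assumes T: "L2_invertible (Top p W E s k)" and T_Suc: "L2_invertible (Top p W E s (Suc k))"
    and g: "g \<in> L2"
  shows "AE x in lebesgue. Pop E (L2_inv (Top p W E s (Suc k)) (\<lambda>y. g y - Kop p W (Suc k) g y)) x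
     = Pop E (L2_inv (Top p W E s k) (\<lambda>y. g y - Kop p W k g y)) x
       - ip (psi p W k) (Aop p W E s (Suc k) g) * Pop E (L2_inv (Top p W E s k) (Pop E (psi p W k))) x"
proof -
  define f where "f = L2_inv (Top p W E s (Suc k)) (\<lambda>y. g y - Kop p W (Suc k) g y)"
  define f' where "f' = L2_inv (Top p W E s k) (\<lambda>y. g y - Kop p W k g y)"
  define e where "e = L2_inv (Top p W E s k) (Pop E (psi p W k))"
  define q where "q = (\<lambda>x. psi p W k x - Pop E (psi p W k) x)"
  define b where "b = ip (psi p W k) g"
  define c where "c = ip (psi p W k) (Aop p W E s (Suc k) g)"
  define F where "F = (\<lambda>x. f' x - c * e x - b * q x)"
  have f: "f \<in> L2"
    unfolding f_def using L2_inv_correct[OF T_Suc] g by (auto intro: L2_diff Kop_L2)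
  have f': "f' \<in> L2" "AE x in lebesgue. Top p W E s k f' x = g x - Kop p W k g x"
    unfolding f'_def using L2_inv_correct[OF T] g by (auto intro: L2_diff Kop_L2)
  have e: "e \<in> L2" "AE x in lebesgue. Top p W E s k e x = Pop E (psi p W k) x"
    unfolding e_def using L2_inv_correct[OF T Pop_L2[OF psi_L2]] by auto
  have q: "q \<in> L2" "Pop E q = (\<lambda>x. 0)"
    unfolding q_def using psi_L2 by (intro L2_diff Pop_L2) (auto simp: Pop_def indicator_def)
  have F: "F \<in> L2"
    unfolding F_def using f'(1) e(1) q(1) by (intro L2_diff L2_mult_left)
  \<comment> \<open>\<open>T\<^sub>k\<close> maps both \<open>f\<close> and \<open>F\<close> to \<open>(1 - K\<^sub>k)g - cP\<psi>\<^sub>k - bq\<close>\<close>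
  have "AE x in lebesgue. Top p W E s k f x = Top p W E s k F x"
    using Top_L2_inv_Top_Suc_AE[OF T_Suc g] f'(2) e(2)
  proof eventually_elim
    case (elim x)
    have "Top p W E s k F x = Top p W E s k f' x - c * Top p W E s k e x - b * q x"
      using Top_lincomb[OF L2_diff[OF f'(1) L2_mult_left[OF e(1)]] q(1), where a=1 and b="- b" and k=k and x=x]
        Top_lincomb[OF f'(1) e(1), where a=1 and b="- c" and k=k and x=x]
      by (simp add: F_def Top_eq_self_if_Pop_zero[OF q(2)])
    then show ?case
      using elim by (simp add: f_def b_def c_def q_def)
  qed
  then have "AE x in lebesgue. f x = F x"
    by (rule L2_invertible_AE_injective[OF T f F])
  then show ?thesis
  proof eventually_elim
    case (elim x)
    have "Pop E f x = Pop E f' x - c * Pop E e x - b * Pop E q x"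
      by (simp add: Pop_def elim F_def algebra_simps)
    then show ?case
      using q(2) by (simp add: f_def f'_def e_def c_def)
  qed
qed

lemma Aop_Suc_AE:
  assumes T: "L2_invertible (Top p W E s k)" and T_Suc: "L2_invertible (Top p W E s (Suc k))"
    and g: "g \<in> L2"
  shows "AE x in lebesgue. Aop p W E s (Suc k) g x
     = Aop p W E s k g x + ip (psi p W k) (Aop p W E s (Suc k) g) * Aop_increment p W E s k x"
  using Pop_L2_inv_Top_Suc_AE[OF assms]
proof eventually_elim
  case (elim x)
  have "Aop p W E s (Suc k) g x
      = g x - s * Pop E (L2_inv (Top p W E s (Suc k)) (\<lambda>y. g y - Kop p W (Suc k) g y)) x"
    by (simp add: Aop_def)
  also have "\<dots> = g x - s * (Pop E (L2_inv (Top p W E s k) (\<lambda>y. g y - Kop p W k g y)) x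
       - ip (psi p W k) (Aop p W E s (Suc k) g) * Pop E (L2_inv (Top p W E s k) (Pop E (psi p W k))) x)"
    unfolding elim ..
  also have "\<dots> = Aop p W E s k g x + ip (psi p W k) (Aop p W E s (Suc k) g) * Aop_increment p W E s k x"
    by (simp add: Aop_def[of p W E s k] Aop_increment_def algebra_simps)
  finally show ?case .
qed

lemma ip_Aop_Suc:
  assumes T: "L2_invertible (Top p W E s k)" and T_Suc: "L2_invertible (Top p W E s (Suc k))"
    and g: "g \<in> L2" and \<phi>: "\<phi> \<in> L2"
  shows "ip \<phi> (Aop p W E s (Suc k) g)
     = ip \<phi> (Aop p W E s k g) + ip \<phi> (Aop_increment p W E s k) * ip (psi p W k) (Aop p W E s (Suc k) g)"
proof -
  define c where "c = ip (psi p W k) (Aop p W E s (Suc k) g)"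
  have L2: "Aop p W E s k g \<in> L2" "Aop p W E s (Suc k) g \<in> L2" "Aop_increment p W E s k \<in> L2"
    using T T_Suc g by (auto intro: Aop_L2 Aop_increment_L2)
  have "ip \<phi> (Aop p W E s (Suc k) g) = ip \<phi> (\<lambda>x. 1 * Aop p W E s k g x + c * Aop_increment p W E s k x)"
    using Aop_Suc_AE[OF assms(1-3)] \<phi> L2
    by (intro ip_cong_AE L2_lincomb) (auto simp: c_def mult.commute elim: AE_mp)
  also have "\<dots> = ip \<phi> (Aop p W E s k g) + c * ip \<phi> (Aop_increment p W E s k)"
    using ip_lincomb[OF \<phi> L2(1) L2(3), of 1 c] by simp
  finally show ?thesis by (simp add: c_def mult.commute)
qed

lemma ip_Aop_telescope:
  assumes "n \<le> n'" and T: "\<And>k. k \<in> {n..n'} \<Longrightarrow> L2_invertible (Top p W E s k)"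
    and g: "g \<in> L2" and \<phi>: "\<phi> \<in> L2"
  shows "ip \<phi> (Aop p W E s n' g) = ip \<phi> (Aop p W E s n g)
     + (\<Sum>k\<in>{n..<n'}. ip \<phi> (Aop_increment p W E s k) * ip (psi p W k) (Aop p W E s (Suc k) g))"
  using assms(1,2)
proof (induction n' rule: dec_induct)
  case base
  then show ?case by simp
next
  case (step k)
  then show ?case
    using ip_Aop_Suc[OF step.prems[of k] step.prems[of "Suc k"] g \<phi>] by simp
qed

lemma det_ip_Aop_eq:
  fixes v :: "nat \<Rightarrow> real \<Rightarrow> complex"
  assumes "m \<le> d" and T: "\<And>k. k \<in> {d - m + 1..d} \<Longrightarrow> L2_invertible (Top p W E s k)"
    and v: "\<And>k. v k \<in> L2"
  shows "det (mat m m (\<lambda>(j, k). ip (psi p W (d - (j + 1))) (Aop p W E s d (v k))))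
       = det (mat m m (\<lambda>(j, k). ip (psi p W (d - (j + 1))) (Aop p W E s (d - (j + 1) + 1) (v k))))"
proof (rule det_add_multiples_of_earlier_rows)
  fix j k assume j: "j < m" and k: "k < m"
  have T': "L2_invertible (Top p W E s l)" if "l \<in> {d - j..d}" for l
    using that j \<open>m \<le> d\<close> by (intro T) auto
  have "ip (psi p W (d - (j + 1))) (Aop p W E s d (v k))
      = ip (psi p W (d - (j + 1))) (Aop p W E s (d - j) (v k))
        + (\<Sum>l\<in>{d - j..<d}. ip (psi p W (d - (j + 1))) (Aop_increment p W E s l)
             * ip (psi p W l) (Aop p W E s (Suc l) (v k)))"
    by (rule ip_Aop_telescope[OF _ T' v psi_L2]) auto
  moreover have "(\<Sum>l\<in>{d - j..<d}. h l) = (\<Sum>i<j. h (d - (i + 1)))" for h :: "nat \<Rightarrow> complex"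
    using j \<open>m \<le> d\<close>
    by (intro sum.reindex_bij_witness[of _ "\<lambda>l. d - (l + 1)" "\<lambda>i. d - (i + 1)"]) auto
  moreover have "d - (j + 1) + 1 = d - j" using j \<open>m \<le> d\<close> by auto
  ultimately show "mat m m (\<lambda>(j, k). ip (psi p W (d - (j + 1))) (Aop p W E s d (v k))) $$ (j, k)
      = mat m m (\<lambda>(j, k). ip (psi p W (d - (j + 1))) (Aop p W E s (d - (j + 1) + 1) (v k))) $$ (j, k)
        + (\<Sum>i<j. ip (psi p W (d - (j + 1))) (Aop_increment p W E s (d - (i + 1)))
             * mat m m (\<lambda>(j, k). ip (psi p W (d - (j + 1))) (Aop p W E s (d - (j + 1) + 1) (v k))) $$ (i, k))"
    using j k by simp
qed auto

end

lemma integrable_exp_minus_abs: "integrable lebesgue (\<lambda>x::real. exp (- \<bar>x\<bar>))"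
proof -
  define g where "g = (\<lambda>x::real. indicator {0..} x *\<^sub>R exp (- x))"
  have "(\<lambda>x::real. exp (- x)) absolutely_integrable_on {0..}"
    using integrable_on_exp_minus_to_infinity[of 1 0]
    by (intro nonnegative_absolutely_integrable_1) auto
  hence "integrable lborel g"
    unfolding g_def set_integrable_def by (simp add: integrable_completion)
  hence "integrable lborel (\<lambda>x. g x + g (0 + (-1) * x))"
    using lborel_integrable_real_affine[of g "-1" 0] by auto
  hence "integrable lebesgue (\<lambda>x. g x + g (0 + (-1) * x))"
    by (subst integrable_completion) (auto simp: g_def)
  then show ?thesis
    by (rule Bochner_Integration.integrable_bound)
       (auto intro!: measurable_completion simp: g_def indicator_def)
qed

lemma integrable_weight_const_poly:
  fixes q :: "real poly"
  assumes "degree q = 0" "q \<noteq> 0" and "integrable lebesgue (\<lambda>x. poly q x * poly q x * W x)"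
  shows "integrable lebesgue (W :: real \<Rightarrow> real)"
proof -
  define c where "c = coeff q 0"
  have "c \<noteq> 0"
    using assms(1,2) leading_coeff_0_iff[of q] by (simp add: c_def)
  moreover have "poly q x = c" for x
    using assms(1) by (simp add: c_def poly_altdef)
  ultimately show ?thesis
    using integrable_mult_right[OF assms(3), of "1 / (c * c)"] by simp
qed

lemma psi_in_L2:
  assumes "\<forall>x. W x \<ge> 0" "W \<in> borel_measurable lebesgue"
    and "integrable lebesgue (\<lambda>x. poly (p i) x * poly (p i) x * W x)"
  shows "psi p W i \<in> L2"
proof -
  have "(\<lambda>x. poly (p i) x) \<in> borel_measurable lebesgue"
    using continuous_on_poly[OF continuous_on_id, of UNIV "p i"]
    by (intro measurable_completion) (simp add: borel_measurable_continuous_onI)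
  then have m: "psi p W i \<in> borel_measurable lebesgue"
    unfolding psi_def using assms(2) by measurable
  have "(cmod (psi p W i x))^2 = poly (p i) x * poly (p i) x * W x" for x
    unfolding psi_def norm_of_real power2_abs using assms(1)
    by (simp add: power_mult_distrib power2_eq_square[symmetric])
  then show ?thesis
    using m assms(3) by (simp add: L2_def)
qed

text \<open>The super-exponential decay of \<open>W\<close> beats the growth of \<open>e\<^sup>2\<^sup>a\<^sup>x\<close>; near the origin \<open>W\<close> itself dominates.\<close>
lemma vhat_in_L2:
  assumes W_nonneg: "\<forall>x. W x \<ge> 0" and W_int: "integrable lebesgue W"
    and W_decay: "\<forall>M::real. \<forall>\<^sub>F x in at_infinity. W x \<le> exp (- M * \<bar>x\<bar>)"
  shows "vhat W a \<in> L2"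
proof -
  have "W \<in> borel_measurable lebesgue" using W_int by (rule borel_measurable_integrable)
  moreover have "(\<lambda>x::real. x) \<in> borel_measurable lebesgue"
    by (intro measurable_completion) simp
  ultimately have m: "vhat W a \<in> borel_measurable lebesgue"
    unfolding vhat_def by measurable
  obtain R where R: "\<And>x. R \<le> norm x \<Longrightarrow> W x \<le> exp (- (2 * \<bar>a\<bar> + 1) * \<bar>x\<bar>)"
    using W_decay[rule_format, of "2 * \<bar>a\<bar> + 1"] unfolding eventually_at_infinity by blast
  have sq: "(cmod (vhat W a x))^2 = exp (2 * a * x) * W x" for x
    unfolding vhat_def norm_of_real power2_abs using W_nonneg
    by (simp add: power_mult_distrib exp_double[symmetric] mult.assoc)
  have bound: "exp (2 * a * x) * W x \<le> exp (2 * \<bar>a\<bar> * \<bar>R\<bar>) * W x + exp (- \<bar>x\<bar>)" for x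
  proof (cases "R \<le> \<bar>x\<bar>")
    case True
    have "exp (2 * a * x) * W x \<le> exp (2 * a * x) * exp (- (2 * \<bar>a\<bar> + 1) * \<bar>x\<bar>)"
      using R[of x] True by (intro mult_left_mono) auto
    also have "\<dots> = exp (2 * (a * x - \<bar>a\<bar> * \<bar>x\<bar>) - \<bar>x\<bar>)"
      by (simp add: exp_add[symmetric] algebra_simps)
    also have "\<dots> \<le> exp (- \<bar>x\<bar>)"
      using abs_ge_self[of "a * x"] by (simp add: abs_mult)
    finally show ?thesis using W_nonneg by (smt (verit) exp_ge_zero mult_nonneg_nonneg)
  next
    case False
    have "a * x \<le> \<bar>a\<bar> * \<bar>R\<bar>"
      using False abs_ge_self[of "a * x"] mult_left_mono[of "\<bar>x\<bar>" "\<bar>R\<bar>" "\<bar>a\<bar>"]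
      by (simp add: abs_mult)
    hence "exp (2 * a * x) * W x \<le> exp (2 * \<bar>a\<bar> * \<bar>R\<bar>) * W x"
      using W_nonneg by (intro mult_right_mono) auto
    then show ?thesis by (smt (verit) exp_ge_zero)
  qed
  have "integrable lebesgue (\<lambda>x. exp (2 * \<bar>a\<bar> * \<bar>R\<bar>) * W x + exp (- \<bar>x\<bar>))"
    using W_int integrable_exp_minus_abs by auto
  then have "integrable lebesgue (\<lambda>x. (cmod (vhat W a x))^2)"
    by (rule Bochner_Integration.integrable_bound)
       (use m in measurable, use bound W_nonneg in \<open>auto simp: sq\<close>)
  then show ?thesis using m by (simp add: L2_def)
qed

theorem lemma8p3:
  fixes W :: "real \<Rightarrow> real" and p :: "nat \<Rightarrow> real poly"
    and d m :: nat and a :: "nat \<Rightarrow> real" and E :: "real set" and s :: complex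
  assumes W_nonneg: "\<forall>x. W x \<ge> 0"
    and W_decay: "\<forall>M::real. \<forall>\<^sub>F x in at_infinity. W x \<le> exp (- M * \<bar>x\<bar>)"
    and p_deg: "\<forall>i. degree (p i) = i \<and> lead_coeff (p i) > 0"
    and p_orth: "\<forall>i j. integrable lebesgue (\<lambda>x. poly (p i) x * poly (p j) x * W x) \<and>
                   (LINT x|lebesgue. poly (p i) x * poly (p j) x * W x) = (if i = j then 1 else 0)"
    and dm: "d \<ge> m" "m \<ge> 1"
    and E_meas: "E \<in> sets lebesgue"
    and inv: "\<forall>k\<in>{d - m + 1..d}. L2_invertible (Top p W E s k)"
  shows "det (mat m m (\<lambda>(j, k). ip (psi p W (d - (j + 1)))
                               (Aop p W E s d (vhat W (a (k + 1))))))
       = det (mat m m (\<lambda>(j, k). ip (psi p W (d - (j + 1)))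
                               (Aop p W E s (d - (j + 1) + 1) (vhat W (a (k + 1))))))"
proof -
  have "p 0 \<noteq> 0"
    using p_deg[rule_format, of 0] by auto
  then have W_int: "integrable lebesgue W"
    by (rule integrable_weight_const_poly[OF conjunct1[OF p_deg[rule_format, of 0]] _
          conjunct1[OF p_orth[rule_format, of 0 0]]])
  have "psi p W i \<in> L2" for i
    using conjunct1[OF p_orth[rule_format, of i i]]
    by (rule psi_in_L2[OF W_nonneg borel_measurable_integrable[OF W_int]])
  then interpret L2_kernel p W E s
    using E_meas by unfold_locales
  show ?thesis
    by (rule det_ip_Aop_eq[OF dm(1)]) (use inv in blast, rule vhat_in_L2[OF W_nonneg W_int W_decay])
qed

end
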